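(* Let $E\subset\mathbb R^2$ be a Borel set that is (the graph of) an equivalence relation on $\mathbb R$, and let $\mathcal E$ be the $\sigma$-field of all Borel sets $A\subset\mathbb R$ that are $E$-saturated, i.e. $(x,y)\in E$ implies ($x\in A\iff y\in A$). Then for all probability measures $\mu_1,\mu_2$ on $\mathbb R$, $I_{\mu_1,\mu_2}(E)=1-\sup_{A\in\mathcal E}|\mu_1(A)-\mu_2(A)|$.
   Context: $I_{\mu_1,\mu_2}(E)$ denotes the infimum of $\mu_1(B_1)+\mu_2(B_2)$ over all Borel sets $B_1,B_2\subset\mathbb R$ such that $E\subset(B_1\times\mathbb R)\cup(\mathbb R\times B_2)$. *)

theory Defs
  imports "HOL-Probability.Probability"
begin

definition cover_inf :: "real measure \<Rightarrow> real measure \<Rightarrow> (real \<times> real) set \<Rightarrow> real" where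
  "cover_inf \<mu>1 \<mu>2 E = Inf {measure \<mu>1 B1 + measure \<mu>2 B2 | B1 B2.
      B1 \<in> sets (borel :: real measure) \<and> B2 \<in> sets (borel :: real measure) \<and>
      E \<subseteq> (B1 \<times> UNIV) \<union> (UNIV \<times> B2)}"

definition saturated_borel :: "(real \<times> real) set \<Rightarrow> real set set" where
  "saturated_borel E = {A \<in> sets (borel :: real measure). \<forall>(x, y) \<in> E. (x \<in> A \<longleftrightarrow> y \<in> A)}"

end

theory Submission
  imports Defs
begin

text \<open>
  Covering \<open>E\<close> by \<open>A \<times> UNIV \<union> UNIV \<times> (- A)\<close> and by \<open>(- A) \<times> UNIV \<union> UNIV \<times> A\<close> for a
  saturated Borel set \<open>A\<close> gives \<open>I(E) \<le> 1 - |\<mu>1(A) - \<mu>2(A)|\<close>. Conversely, if Borel sets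
  \<open>B1, B2\<close> cover \<open>E\<close>, then no point of \<open>C = - B1\<close> is \<open>E\<close>-equivalent to a point of
  \<open>D = - B2\<close>, and it suffices to find a saturated Borel set \<open>A\<close> with \<open>C \<subseteq> A \<subseteq> B2\<close>.
  The saturation of a Borel set is the projection of a Borel subset of the plane, hence an
  analytic (Suslin) set, and disjoint analytic sets are separated by a Borel set (Lusin).
  Starting from \<open>C\<close>, separating the saturation of the current set from the saturation of
  \<open>D\<close> again and again produces an increasing sequence of Borel sets whose union is the
  required \<open>A\<close>.
\<close>

section \<open>Baire space and Suslin sets\<close>

definition cylinder :: "nat \<Rightarrow> (nat \<Rightarrow> 'a) \<Rightarrow> (nat \<Rightarrow> 'a) set" where
  "cylinder n x = {y. \<forall>i<n. y i = x i}"

lemma self_in_cylinder [simp]: "x \<in> cylinder n x"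
  by (simp add: cylinder_def)

lemma cylinder_0 [simp]: "cylinder 0 x = UNIV"
  by (simp add: cylinder_def)

lemma cylinder_antimono: "m \<le> n \<Longrightarrow> cylinder n x \<subseteq> cylinder m x"
  by (auto simp: cylinder_def)

lemma cylinder_eq: "y \<in> cylinder n x \<Longrightarrow> cylinder n y = cylinder n x"
  by (auto simp: cylinder_def)

lemma cylinder_Suc_shift: "y \<in> cylinder (Suc n) x \<Longrightarrow> y 0 = x 0 \<and> y \<circ> Suc \<in> cylinder n (x \<circ> Suc)"
  by (simp add: cylinder_def)

lemma cylinder_Suc_split: "cylinder n x = (\<Union>i. cylinder (Suc n) (x(n := i)))"
proof (intro equalityI subsetI)
  fix y assume "y \<in> cylinder n x"
  then have "y \<in> cylinder (Suc n) (x(n := y n))" by (simp add: cylinder_def less_Suc_eq)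
  then show "y \<in> (\<Union>i. cylinder (Suc n) (x(n := i)))" by blast
qed (auto simp: cylinder_def)

lemma cylinder_diagonal:
  assumes "\<And>n. u (Suc n) \<in> cylinder n (u n)"
  shows "(\<lambda>i. u (Suc i) i) \<in> cylinder n (u n)"
proof -
  have stable: "u m i = u (Suc i) i" if "Suc i \<le> m" for i m
    using that
  proof (induction m rule: dec_induct)
    case base
    show ?case ..
  next
    case (step m)
    have "u (Suc m) i = u m i" using assms[of m] step(1) by (simp add: cylinder_def)
    then show ?case using step(3) by (rule trans)
  qed
  show ?thesis
    unfolding cylinder_def
  proof (intro CollectI allI impI)
    fix i assume "i < n"
    then show "u (Suc i) i = u n i" using stable[of i n] by simp
  qed
qed

text \<open>
  Baire space \<open>nat \<Rightarrow> nat\<close> is handled through its basic open sets, the cylinders, rather than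
  through the product topology on functions; the Suslin sets are the analytic sets.
\<close>

definition baire_closed :: "(nat \<Rightarrow> nat) set \<Rightarrow> bool" where
  "baire_closed F \<longleftrightarrow> (\<forall>x. (\<forall>n. F \<inter> cylinder n x \<noteq> {}) \<longrightarrow> x \<in> F)"

definition baire_continuous_on ::
    "(nat \<Rightarrow> nat) set \<Rightarrow> ((nat \<Rightarrow> nat) \<Rightarrow> 'a::topological_space) \<Rightarrow> bool" where
  "baire_continuous_on F f \<longleftrightarrow>
     (\<forall>x\<in>F. \<forall>U. open U \<longrightarrow> f x \<in> U \<longrightarrow> (\<exists>n. f ` (F \<inter> cylinder n x) \<subseteq> U))"

definition suslin :: "'a::topological_space set \<Rightarrow> bool" where
  "suslin A \<longleftrightarrow> (\<exists>F f. baire_closed F \<and> baire_continuous_on F f \<and> A = f ` F)"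

lemma baire_closedD: "baire_closed F \<Longrightarrow> (\<And>n. F \<inter> cylinder n x \<noteq> {}) \<Longrightarrow> x \<in> F"
  unfolding baire_closed_def by blast

lemma baire_continuous_onD:
  "baire_continuous_on F f \<Longrightarrow> x \<in> F \<Longrightarrow> open U \<Longrightarrow> f x \<in> U \<Longrightarrow>
    \<exists>n. f ` (F \<inter> cylinder n x) \<subseteq> U"
  unfolding baire_continuous_on_def by blast

lemma suslinI: "baire_closed F \<Longrightarrow> baire_continuous_on F f \<Longrightarrow> A = f ` F \<Longrightarrow> suslin A"
  unfolding suslin_def by blast

lemma suslinE:
  assumes "suslin A"
  obtains F f where "baire_closed F" "baire_continuous_on F f" "A = f ` F"
  using assms unfolding suslin_def by blast

lemma suslin_seqE:
  assumes "\<And>n. suslin (A n)"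
  obtains F f where "\<And>n. baire_closed (F n)" "\<And>n. baire_continuous_on (F n) (f n)"
    "\<And>n. A n = f n ` F n"
proof -
  have "\<forall>n. \<exists>F f. baire_closed F \<and> baire_continuous_on F f \<and> A n = f ` F"
    using assms unfolding suslin_def by blast
  then show ?thesis using that by metis
qed

lemma baire_closed_Int_cylinder:
  assumes "baire_closed F" shows "baire_closed (F \<inter> cylinder n x)"
  unfolding baire_closed_def
proof (intro allI impI)
  fix z assume meets: "\<forall>m. F \<inter> cylinder n x \<inter> cylinder m z \<noteq> {}"
  then have "z \<in> F" by (intro baire_closedD[OF assms]) blast
  moreover obtain y where "y \<in> cylinder n x" "y \<in> cylinder n z" using meets by blast
  then have "z \<in> cylinder n x" by (auto simp: cylinder_def)
  ultimately show "z \<in> F \<inter> cylinder n x" by blast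
qed

lemma baire_continuous_on_subset:
  assumes "baire_continuous_on F f" "G \<subseteq> F"
  shows "baire_continuous_on G f"
  unfolding baire_continuous_on_def
proof (intro ballI allI impI)
  fix x U assume "x \<in> G" "open U" "f x \<in> U"
  then obtain n where "f ` (F \<inter> cylinder n x) \<subseteq> U"
    using assms baire_continuous_onD by blast
  then show "\<exists>n. f ` (G \<inter> cylinder n x) \<subseteq> U" using assms(2) by blast
qed

lemma suslin_empty [simp]: "suslin {}"
  unfolding suslin_def baire_closed_def baire_continuous_on_def by (intro exI[of _ "{}"]) auto

lemma suslin_continuous_image:
  assumes "suslin A" "continuous_on A g"
  shows "suslin (g ` A)"
proof -
  obtain F f where F: "baire_closed F" "baire_continuous_on F f" "A = f ` F"
    using assms(1) by (rule suslinE)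
  have "baire_continuous_on F (g \<circ> f)"
    unfolding baire_continuous_on_def
  proof (intro ballI allI impI)
    fix x U assume x: "x \<in> F" and U: "open U" "(g \<circ> f) x \<in> U"
    obtain V where V: "open V" "V \<inter> A = g -` U \<inter> A"
      using assms(2) U(1) unfolding continuous_on_open_invariant by blast
    have "f x \<in> A" using x F(3) by blast
    then have "f x \<in> V" using V(2) U(2) by auto
    then obtain n where n: "f ` (F \<inter> cylinder n x) \<subseteq> V"
      using baire_continuous_onD[OF F(2) x V(1)] by blast
    have "f ` (F \<inter> cylinder n x) \<subseteq> A" using F(3) by blast
    with n have "f ` (F \<inter> cylinder n x) \<subseteq> g -` U" using V(2) by blast
    then have "(g \<circ> f) ` (F \<inter> cylinder n x) \<subseteq> U" by (auto simp: image_comp[symmetric])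
    then show "\<exists>n. (g \<circ> f) ` (F \<inter> cylinder n x) \<subseteq> U" ..
  qed
  moreover have "g ` A = (g \<circ> f) ` F" by (simp add: F(3) image_comp)
  ultimately show ?thesis by (rule suslinI[OF F(1)])
qed

lemma baire_continuous_on_separate:
  fixes f g :: "(nat \<Rightarrow> nat) \<Rightarrow> 'a::t2_space"
  assumes "baire_continuous_on F f" "baire_continuous_on G g" "x \<in> F" "y \<in> G" "f x \<noteq> g y"
  obtains n U where "open U" "f ` (F \<inter> cylinder n x) \<subseteq> U" "g ` (G \<inter> cylinder n y) \<inter> U = {}"
proof -
  obtain U V where UV: "open U" "open V" "f x \<in> U" "g y \<in> V" "U \<inter> V = {}"
    using hausdorff[OF assms(5)] by blast
  obtain n1 where n1: "f ` (F \<inter> cylinder n1 x) \<subseteq> U"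
    using baire_continuous_onD[OF assms(1,3) UV(1,3)] by blast
  obtain n2 where n2: "g ` (G \<inter> cylinder n2 y) \<subseteq> V"
    using baire_continuous_onD[OF assms(2,4) UV(2,4)] by blast
  define n where "n = max n1 n2"
  have "cylinder n x \<subseteq> cylinder n1 x" "cylinder n y \<subseteq> cylinder n2 y"
    unfolding n_def by (simp_all add: cylinder_antimono)
  then have "f ` (F \<inter> cylinder n x) \<subseteq> U" "g ` (G \<inter> cylinder n y) \<inter> U = {}"
    using n1 n2 UV(5) by blast+
  with UV(1) show ?thesis by (rule that)
qed

lemma baire_closed_tagged:
  assumes "\<And>n. baire_closed (F n)"
  shows "baire_closed {x. x \<circ> Suc \<in> F (x 0)}"
  unfolding baire_closed_def
proof (intro allI impI CollectI)
  fix x assume meets: "\<forall>n. {x. x \<circ> Suc \<in> F (x 0)} \<inter> cylinder n x \<noteq> {}"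
  show "x \<circ> Suc \<in> F (x 0)"
  proof (rule baire_closedD[OF assms])
    fix n
    obtain y where "y \<circ> Suc \<in> F (y 0)" "y \<in> cylinder (Suc n) x" using meets by blast
    then have "y \<circ> Suc \<in> F (x 0) \<inter> cylinder n (x \<circ> Suc)" using cylinder_Suc_shift[of y n x] by simp
    then show "F (x 0) \<inter> cylinder n (x \<circ> Suc) \<noteq> {}" by blast
  qed
qed

lemma baire_continuous_on_tagged:
  assumes "\<And>n. baire_continuous_on (F n) (f n)"
  shows "baire_continuous_on {x. x \<circ> Suc \<in> F (x 0)} (\<lambda>x. f (x 0) (x \<circ> Suc))"
  unfolding baire_continuous_on_def
proof (intro ballI allI impI)
  fix x U assume x: "x \<in> {x. x \<circ> Suc \<in> F (x 0)}" and U: "open U" "f (x 0) (x \<circ> Suc) \<in> U"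
  define t u where "t = x 0" and "u = x \<circ> Suc"
  have u: "u \<in> F t" "f t u \<in> U" using x U(2) by (simp_all add: t_def u_def)
  obtain n where n: "f t ` (F t \<inter> cylinder n u) \<subseteq> U"
    using baire_continuous_onD[OF assms u(1) U(1) u(2)] by blast
  have "(\<lambda>x. f (x 0) (x \<circ> Suc)) ` ({x. x \<circ> Suc \<in> F (x 0)} \<inter> cylinder (Suc n) x) \<subseteq> U"
  proof (rule image_subsetI)
    fix y assume y: "y \<in> {x. x \<circ> Suc \<in> F (x 0)} \<inter> cylinder (Suc n) x"
    then have "y 0 = t" "y \<circ> Suc \<in> F t \<inter> cylinder n u"
      using cylinder_Suc_shift[of y n x] by (auto simp: t_def u_def)
    with n show "f (y 0) (y \<circ> Suc) \<in> U" by blast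
  qed
  then show "\<exists>n. (\<lambda>x. f (x 0) (x \<circ> Suc)) ` ({x. x \<circ> Suc \<in> F (x 0)} \<inter> cylinder n x) \<subseteq> U" ..
qed

lemma suslin_UN:
  fixes A :: "nat \<Rightarrow> 'a::topological_space set"
  assumes "\<And>n. suslin (A n)"
  shows "suslin (\<Union>n. A n)"
proof -
  obtain F f where F: "\<And>n. baire_closed (F n)" "\<And>n. baire_continuous_on (F n) (f n)"
    "\<And>n. A n = f n ` F n"
    by (rule suslin_seqE[of A, OF assms]) blast
  have "(\<Union>n. A n) = (\<lambda>x. f (x 0) (x \<circ> Suc)) ` {x. x \<circ> Suc \<in> F (x 0)}"
  proof
    show "(\<lambda>x. f (x 0) (x \<circ> Suc)) ` {x. x \<circ> Suc \<in> F (x 0)} \<subseteq> (\<Union>n. A n)"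
      using F(3) by auto
    show "(\<Union>n. A n) \<subseteq> (\<lambda>x. f (x 0) (x \<circ> Suc)) ` {x. x \<circ> Suc \<in> F (x 0)}"
    proof
      fix a assume "a \<in> (\<Union>n. A n)"
      then obtain n z where "z \<in> F n" "a = f n z" using F(3) by blast
      moreover have "case_nat n z \<circ> Suc = z" by auto
      ultimately show "a \<in> (\<lambda>x. f (x 0) (x \<circ> Suc)) ` {x. x \<circ> Suc \<in> F (x 0)}"
        by (intro image_eqI[of _ _ "case_nat n z"]) simp_all
    qed
  qed
  with baire_closed_tagged[OF F(1)] baire_continuous_on_tagged[OF F(2)] show ?thesis
    by (rule suslinI)
qed

lemma suslin_UN_countable:
  fixes A :: "'i::countable \<Rightarrow> 'a::topological_space set"
  assumes "\<And>i. suslin (A i)"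
  shows "suslin (\<Union>i. A i)"
proof -
  have "(\<Union>i. A i) = (\<Union>n. A (from_nat n))"
  proof (intro equalityI subsetI)
    fix a assume "a \<in> (\<Union>i. A i)"
    then obtain i where "a \<in> A i" by blast
    then have "a \<in> A (from_nat (to_nat i))" by simp
    then show "a \<in> (\<Union>n. A (from_nat n))" by blast
  qed blast
  then show ?thesis using suslin_UN[of "\<lambda>n. A (from_nat n)"] assms by simp
qed

definition coordinate :: "nat \<Rightarrow> (nat \<Rightarrow> 'a) \<Rightarrow> nat \<Rightarrow> 'a" where
  "coordinate k x i = x (prod_encode (i, k))"

lemma strict_mono_prod_encode_fst: "strict_mono (\<lambda>i. prod_encode (i, k))"
  by (simp add: strict_mono_Suc_iff prod_encode_def)

lemma coordinate_cylinder:
  assumes "y \<in> cylinder m x" "prod_encode (n, k) \<le> m"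
  shows "coordinate k y \<in> cylinder n (coordinate k x)"
proof -
  have "prod_encode (i, k) < m" if "i < n" for i
  proof -
    have "prod_encode (i, k) < prod_encode (n, k)"
      using strict_mono_prod_encode_fst[of k] that by (simp add: strict_mono_def)
    with assms(2) show ?thesis by linarith
  qed
  with assms(1) show ?thesis by (simp add: cylinder_def coordinate_def)
qed

lemma coordinate_prod_decode: "coordinate k (\<lambda>j. case prod_decode j of (i, l) \<Rightarrow> z l i) = z k"
  by (simp add: fun_eq_iff coordinate_def)

lemma baire_continuous_on_coordinate:
  assumes "baire_continuous_on F f"
  shows "baire_continuous_on {x. coordinate k x \<in> F} (\<lambda>x. f (coordinate k x))"
  unfolding baire_continuous_on_def
proof (intro ballI allI impI)
  fix x U assume x: "x \<in> {x. coordinate k x \<in> F}" and U: "open U" "f (coordinate k x) \<in> U"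
  define u where "u = coordinate k x"
  have u: "u \<in> F" "f u \<in> U" using x U(2) by (simp_all add: u_def)
  obtain n where n: "f ` (F \<inter> cylinder n u) \<subseteq> U"
    using baire_continuous_onD[OF assms u(1) U(1) u(2)] by blast
  have "(\<lambda>x. f (coordinate k x)) ` ({x. coordinate k x \<in> F} \<inter> cylinder (prod_encode (n, k)) x) \<subseteq> U"
  proof (rule image_subsetI)
    fix y assume y: "y \<in> {x. coordinate k x \<in> F} \<inter> cylinder (prod_encode (n, k)) x"
    then have "coordinate k y \<in> F \<inter> cylinder n u"
      using coordinate_cylinder[of y "prod_encode (n, k)" x n k] by (simp add: u_def)
    with n show "f (coordinate k y) \<in> U" by blast
  qed
  then show "\<exists>n. (\<lambda>x. f (coordinate k x)) ` ({x. coordinate k x \<in> F} \<inter> cylinder n x) \<subseteq> U" ..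
qed

lemma baire_closed_coordinates:
  fixes f :: "nat \<Rightarrow> (nat \<Rightarrow> nat) \<Rightarrow> 'a::t2_space"
  assumes closed: "\<And>k. baire_closed (F k)" and cont: "\<And>k. baire_continuous_on (F k) (f k)"
  shows "baire_closed {x. \<forall>k. coordinate k x \<in> F k \<and> f k (coordinate k x) = f 0 (coordinate 0 x)}"
    (is "baire_closed ?G")
  unfolding baire_closed_def
proof (intro allI impI)
  fix x assume meets: "\<forall>n. ?G \<inter> cylinder n x \<noteq> {}"
  have near: "\<exists>y\<in>?G. coordinate k y \<in> cylinder n (coordinate k x) \<and>
      coordinate 0 y \<in> cylinder n (coordinate 0 x)" for k n
  proof -
    obtain y where y: "y \<in> ?G" "y \<in> cylinder (prod_encode (n, k) + prod_encode (n, 0)) x"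
      using meets by blast
    have "coordinate k y \<in> cylinder n (coordinate k x)" "coordinate 0 y \<in> cylinder n (coordinate 0 x)"
      by (rule coordinate_cylinder[OF y(2)], simp)+
    with y(1) show ?thesis by blast
  qed
  have in_F: "coordinate k x \<in> F k" for k
  proof (rule baire_closedD[OF closed])
    fix n
    obtain y where "y \<in> ?G" "coordinate k y \<in> cylinder n (coordinate k x)" using near by blast
    then show "F k \<inter> cylinder n (coordinate k x) \<noteq> {}" by blast
  qed
  have "f k (coordinate k x) = f 0 (coordinate 0 x)" for k
  proof (rule ccontr)
    assume "f k (coordinate k x) \<noteq> f 0 (coordinate 0 x)"
    then obtain n U where U: "f k ` (F k \<inter> cylinder n (coordinate k x)) \<subseteq> U"
      "f 0 ` (F 0 \<inter> cylinder n (coordinate 0 x)) \<inter> U = {}"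
      by (rule baire_continuous_on_separate[OF cont cont in_F in_F])
    obtain y where "y \<in> ?G" "coordinate k y \<in> cylinder n (coordinate k x)"
      "coordinate 0 y \<in> cylinder n (coordinate 0 x)"
      using near by blast
    with U show False by blast
  qed
  with in_F show "x \<in> ?G" by blast
qed

lemma suslin_INT:
  fixes A :: "nat \<Rightarrow> 'a::t2_space set"
  assumes "\<And>n. suslin (A n)"
  shows "suslin (\<Inter>n. A n)"
proof -
  obtain F f where F: "\<And>n. baire_closed (F n)" "\<And>n. baire_continuous_on (F n) (f n)"
    "\<And>n. A n = f n ` F n"
    by (rule suslin_seqE[of A, OF assms]) blast
  define G where "G = {x. \<forall>k. coordinate k x \<in> F k \<and> f k (coordinate k x) = f 0 (coordinate 0 x)}"
  have "baire_closed G" unfolding G_def using F(1,2) by (rule baire_closed_coordinates)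
  moreover have "baire_continuous_on G (\<lambda>x. f 0 (coordinate 0 x))"
    by (rule baire_continuous_on_subset[OF baire_continuous_on_coordinate[OF F(2)]]) (auto simp: G_def)
  moreover have "(\<Inter>n. A n) = (\<lambda>x. f 0 (coordinate 0 x)) ` G"
  proof
    show "(\<lambda>x. f 0 (coordinate 0 x)) ` G \<subseteq> (\<Inter>n. A n)"
    proof (rule image_subsetI)
      fix y assume "y \<in> G"
      have "f 0 (coordinate 0 y) \<in> A k" for k
      proof -
        from \<open>y \<in> G\<close> have "coordinate k y \<in> F k" "f k (coordinate k y) = f 0 (coordinate 0 y)"
          by (simp_all add: G_def)
        then have "f 0 (coordinate 0 y) \<in> f k ` F k" by (metis image_eqI)
        then show ?thesis by (simp add: F(3))
      qed
      then show "f 0 (coordinate 0 y) \<in> (\<Inter>n. A n)" by blast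
    qed
    show "(\<Inter>n. A n) \<subseteq> (\<lambda>x. f 0 (coordinate 0 x)) ` G"
    proof
      fix a assume "a \<in> (\<Inter>n. A n)"
      then have "\<forall>k. \<exists>z\<in>F k. a = f k z" using F(3) by blast
      then obtain z where z: "\<And>k. z k \<in> F k" "\<And>k. a = f k (z k)" by metis
      define x where "x = (\<lambda>j. case prod_decode j of (i, l) \<Rightarrow> z l i)"
      have "coordinate k x = z k" for k unfolding x_def by (rule coordinate_prod_decode)
      then have "x \<in> G" "a = f 0 (coordinate 0 x)" using z by (simp_all add: G_def)
      then show "a \<in> (\<lambda>x. f 0 (coordinate 0 x)) ` G" by blast
    qed
  qed
  ultimately show ?thesis by (rule suslinI)
qed

definition evens :: "(nat \<Rightarrow> 'a) \<Rightarrow> nat \<Rightarrow> 'a" where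
  "evens x i = x (2 * i)"

definition odds :: "(nat \<Rightarrow> 'a) \<Rightarrow> nat \<Rightarrow> 'a" where
  "odds x i = x (2 * i + 1)"

lemma evens_odds_cylinder:
  assumes "y \<in> cylinder (2 * n) x"
  shows "evens y \<in> cylinder n (evens x)" "odds y \<in> cylinder n (odds x)"
  using assms by (simp_all add: cylinder_def evens_def odds_def)

lemma evens_odds_interleave:
  "evens (\<lambda>j. if even j then u (j div 2) else v (j div 2)) = u"
  "odds (\<lambda>j. if even j then u (j div 2) else v (j div 2)) = v"
  by (simp_all add: fun_eq_iff evens_def odds_def)

lemma baire_closed_pair:
  assumes F: "baire_closed F" and H: "baire_closed H"
  shows "baire_closed {x. evens x \<in> F \<and> odds x \<in> H}"
  unfolding baire_closed_def
proof (intro allI impI CollectI conjI)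
  fix x assume meets: "\<forall>n. {x. evens x \<in> F \<and> odds x \<in> H} \<inter> cylinder n x \<noteq> {}"
  have near: "\<exists>y. evens y \<in> F \<inter> cylinder n (evens x) \<and> odds y \<in> H \<inter> cylinder n (odds x)" for n
  proof -
    obtain y where "evens y \<in> F" "odds y \<in> H" "y \<in> cylinder (2 * n) x" using meets by blast
    then show ?thesis using evens_odds_cylinder by blast
  qed
  show "evens x \<in> F"
    using F by (rule baire_closedD) (use near in blast)
  show "odds x \<in> H"
    using H by (rule baire_closedD) (use near in blast)
qed

lemma baire_continuous_on_pair:
  fixes f :: "(nat \<Rightarrow> nat) \<Rightarrow> 'a::topological_space" and h :: "(nat \<Rightarrow> nat) \<Rightarrow> 'b::topological_space"
  assumes F: "baire_continuous_on F f" and H: "baire_continuous_on H h"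
  shows "baire_continuous_on {x. evens x \<in> F \<and> odds x \<in> H} (\<lambda>x. (f (evens x), h (odds x)))"
  unfolding baire_continuous_on_def
proof (intro ballI allI impI)
  fix x U assume x: "x \<in> {x. evens x \<in> F \<and> odds x \<in> H}" and U: "open U" "(f (evens x), h (odds x)) \<in> U"
  define u v where "u = evens x" and "v = odds x"
  from x have uv: "u \<in> F" "v \<in> H" by (simp_all add: u_def v_def)
  obtain V W where VW: "open V" "open W" "(f u, h v) \<in> V \<times> W" "V \<times> W \<subseteq> U"
    using open_prod_elim[OF U] unfolding u_def v_def by blast
  then have "f u \<in> V" "h v \<in> W" by simp_all
  then obtain n1 n2 where n1: "f ` (F \<inter> cylinder n1 u) \<subseteq> V"
    and n2: "h ` (H \<inter> cylinder n2 v) \<subseteq> W"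
    using baire_continuous_onD[OF F uv(1) VW(1)] baire_continuous_onD[OF H uv(2) VW(2)] by blast
  have "(\<lambda>x. (f (evens x), h (odds x))) ` ({x. evens x \<in> F \<and> odds x \<in> H} \<inter> cylinder (2 * (n1 + n2)) x) \<subseteq> U"
  proof (rule image_subsetI)
    fix y assume y: "y \<in> {x. evens x \<in> F \<and> odds x \<in> H} \<inter> cylinder (2 * (n1 + n2)) x"
    have "cylinder (n1 + n2) u \<subseteq> cylinder n1 u" "cylinder (n1 + n2) v \<subseteq> cylinder n2 v"
      by (simp_all add: cylinder_antimono)
    moreover have "evens y \<in> cylinder (n1 + n2) u" "odds y \<in> cylinder (n1 + n2) v"
      using y evens_odds_cylinder unfolding u_def v_def by blast+
    ultimately have "evens y \<in> F \<inter> cylinder n1 u" "odds y \<in> H \<inter> cylinder n2 v" using y by blast+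
    then have "(f (evens y), h (odds y)) \<in> V \<times> W" using n1 n2 by blast
    with VW(4) show "(f (evens y), h (odds y)) \<in> U" by blast
  qed
  then show "\<exists>n. (\<lambda>x. (f (evens x), h (odds x))) ` ({x. evens x \<in> F \<and> odds x \<in> H} \<inter> cylinder n x) \<subseteq> U" ..
qed

lemma suslin_Times:
  fixes A :: "'a::topological_space set" and B :: "'b::topological_space set"
  assumes "suslin A" "suslin B"
  shows "suslin (A \<times> B)"
proof -
  obtain F f where F: "baire_closed F" "baire_continuous_on F f" "A = f ` F"
    using assms(1) by (rule suslinE)
  obtain H h where H: "baire_closed H" "baire_continuous_on H h" "B = h ` H"
    using assms(2) by (rule suslinE)
  have "A \<times> B = (\<lambda>x. (f (evens x), h (odds x))) ` {x. evens x \<in> F \<and> odds x \<in> H}"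
  proof
    show "(\<lambda>x. (f (evens x), h (odds x))) ` {x. evens x \<in> F \<and> odds x \<in> H} \<subseteq> A \<times> B"
      using F(3) H(3) by auto
    show "A \<times> B \<subseteq> (\<lambda>x. (f (evens x), h (odds x))) ` {x. evens x \<in> F \<and> odds x \<in> H}"
    proof
      fix p assume "p \<in> A \<times> B"
      then obtain u v where uv: "u \<in> F" "v \<in> H" "p = (f u, h v)" using F(3) H(3) by blast
      define x where "x j = (if even j then u (j div 2) else v (j div 2))" for j
      have "evens x = u" "odds x = v" unfolding x_def by (rule evens_odds_interleave)+
      with uv show "p \<in> (\<lambda>x. (f (evens x), h (odds x))) ` {x. evens x \<in> F \<and> odds x \<in> H}"
        by (intro image_eqI[of _ _ x]) simp_all
    qed
  qed
  with baire_closed_pair[OF F(1) H(1)] baire_continuous_on_pair[OF F(2) H(2)] show ?thesis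
    by (rule suslinI)
qed

section \<open>Borel sets are Suslin\<close>

lemma suslin_Int_closed:
  assumes "suslin A" "closed S"
  shows "suslin (A \<inter> S)"
proof -
  obtain F f where F: "baire_closed F" "baire_continuous_on F f" "A = f ` F"
    using assms(1) by (rule suslinE)
  have "baire_closed (F \<inter> f -` S)"
    unfolding baire_closed_def
  proof (intro allI impI)
    fix x assume meets: "\<forall>n. F \<inter> f -` S \<inter> cylinder n x \<noteq> {}"
    then have "x \<in> F" by (intro baire_closedD[OF F(1)]) blast
    moreover have "f x \<in> S"
    proof (rule ccontr)
      assume "f x \<notin> S"
      then obtain n where "f ` (F \<inter> cylinder n x) \<subseteq> - S"
        using baire_continuous_onD[OF F(2) \<open>x \<in> F\<close> open_Compl[OF assms(2)]] by blast
      then show False using meets by blast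
    qed
    ultimately show "x \<in> F \<inter> f -` S" by blast
  qed
  moreover have "baire_continuous_on (F \<inter> f -` S) f"
    using F(2) by (rule baire_continuous_on_subset) blast
  moreover have "A \<inter> S = f ` (F \<inter> f -` S)" using F(3) by blast
  ultimately show ?thesis by (rule suslinI)
qed

lemma suslin_Int_open:
  assumes "suslin A" "open S"
  shows "suslin (A \<inter> S)"
proof -
  obtain F f where F: "baire_closed F" "baire_continuous_on F f" "A = f ` F"
    using assms(1) by (rule suslinE)
  define C where "C l = F \<inter> cylinder (length l) ((!) l)" for l :: "nat list"
  define T where "T l = (if C l \<subseteq> f -` S then f ` C l else {})" for l
  have "suslin (T l)" for l
  proof (cases "C l \<subseteq> f -` S")
    case True
    have "baire_closed (C l)" unfolding C_def using F(1) by (rule baire_closed_Int_cylinder)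
    moreover have "baire_continuous_on (C l) f"
      using F(2) by (rule baire_continuous_on_subset) (simp add: C_def)
    ultimately show ?thesis using True unfolding T_def by (intro suslinI) simp_all
  qed (simp add: T_def)
  moreover have "A \<inter> S = (\<Union>l. T l)"
  proof
    show "(\<Union>l. T l) \<subseteq> A \<inter> S" using F(3) by (auto simp: T_def C_def split: if_splits)
    show "A \<inter> S \<subseteq> (\<Union>l. T l)"
    proof
      fix a assume "a \<in> A \<inter> S"
      then obtain x where x: "x \<in> F" "a = f x" "f x \<in> S" using F(3) by blast
      then obtain n where n: "f ` (F \<inter> cylinder n x) \<subseteq> S"
        using baire_continuous_onD[OF F(2) x(1) assms(2)] by blast
      define l where "l = map x [0..<n]"
      have "C l = F \<inter> cylinder n x" by (auto simp: C_def l_def cylinder_def)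
      with n x have "a \<in> T l" by (auto simp: T_def)
      then show "a \<in> (\<Union>l. T l)" by blast
    qed
  qed
  ultimately show ?thesis by (simp add: suslin_UN_countable)
qed

lemma suslin_borel:
  fixes S :: "'a::t2_space set"
  assumes "suslin (UNIV :: 'a set)" "S \<in> sets borel"
  shows "suslin S"
proof -
  have "suslin S \<and> suslin (- S)"
    using assms(2) unfolding sets_borel
  proof (induction rule: sigma_sets.induct)
    case (Basic S)
    then have "open S" "closed (- S)" by auto
    then show ?case
      using suslin_Int_open[OF assms(1)] suslin_Int_closed[OF assms(1)] by simp
  next
    case Empty
    show ?case using assms(1) by simp
  next
    case (Compl S)
    then show ?case by (simp add: Compl_eq_Diff_UNIV[symmetric])
  next
    case (Union S)
    then have "suslin (\<Union>i. S i)" "suslin (\<Inter>i. - S i)"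
      by (simp_all add: suslin_UN suslin_INT)
    then show ?case by simp
  qed
  then show ?thesis ..
qed

section \<open>A continuous surjection from Baire space onto the reals\<close>

definition binary_fraction :: "(nat \<Rightarrow> nat) \<Rightarrow> real" where
  "binary_fraction x = (\<Sum>k. real (min 1 (x k)) / 2 ^ Suc k)"

definition binary_real :: "(nat \<Rightarrow> nat) \<Rightarrow> real" where
  "binary_real x = real_of_int (int_decode (x 0)) + binary_fraction (x \<circ> Suc)"

lemma binary_digit_bounds:
  "0 \<le> real (min 1 n) / 2 ^ Suc k" "real (min 1 n) / 2 ^ Suc k \<le> (1/2) ^ Suc k"
proof -
  show "0 \<le> real (min 1 n) / 2 ^ Suc k" by simp
  have "real (min 1 n) / 2 ^ Suc k \<le> 1 / 2 ^ Suc k"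
    by (rule divide_right_mono) simp_all
  then show "real (min 1 n) / 2 ^ Suc k \<le> (1/2) ^ Suc k" by (simp only: power_one_over)
qed

lemma half_powers_sums: "(\<lambda>k. (1/2::real) ^ Suc (k + n)) sums (1/2) ^ n"
proof -
  have "(\<lambda>k. (1/2) ^ Suc n * (1/2::real) ^ k) sums ((1/2) ^ Suc n * (1 / (1 - 1/2)))"
    by (intro sums_mult geometric_sums) simp
  moreover have "(1/2::real) ^ Suc n * (1 / (1 - 1/2)) = (1/2) ^ n" by simp
  moreover have "(1/2::real) ^ Suc n * (1/2) ^ k = (1/2) ^ Suc (k + n)" for k
  proof -
    have "Suc (k + n) = Suc n + k" by simp
    then show ?thesis by (simp only: power_add)
  qed
  ultimately show ?thesis by simp
qed

lemma summable_binary_digits: "summable (\<lambda>k. real (min 1 (x k)) / 2 ^ Suc k)"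
proof (rule summable_comparison_test'[OF sums_summable[OF half_powers_sums[of 0]]])
  fix k
  show "norm (real (min 1 (x k)) / 2 ^ Suc k) \<le> (1/2) ^ Suc (k + 0)"
    using binary_digit_bounds[of "x k" k] by simp
qed

lemma binary_fraction_cylinder:
  assumes "y \<in> cylinder n x"
  shows "\<bar>binary_fraction x - binary_fraction y\<bar> \<le> (1/2) ^ n"
proof -
  define c where "c = (\<lambda>k. real (min 1 (x k)) / 2 ^ Suc k - real (min 1 (y k)) / 2 ^ Suc k)"
  have c_bound: "\<bar>c (k + n)\<bar> \<le> (1/2) ^ Suc (k + n)" for k
    using binary_digit_bounds[of "x (k + n)" "k + n"] binary_digit_bounds[of "y (k + n)" "k + n"]
    unfolding c_def by linarith
  have summable_tail: "summable (\<lambda>k. \<bar>c (k + n)\<bar>)"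
    by (rule summable_comparison_test'[OF sums_summable[OF half_powers_sums]]) (use c_bound in simp)
  have "binary_fraction x - binary_fraction y = suminf c"
    unfolding binary_fraction_def c_def by (rule suminf_diff[OF summable_binary_digits summable_binary_digits])
  also have "\<dots> = (\<Sum>k. c (k + n))"
  proof -
    have "summable c" unfolding c_def by (intro summable_diff summable_binary_digits)
    moreover have "(\<Sum>i<n. c i) = 0" using assms by (simp add: c_def cylinder_def)
    ultimately show ?thesis using suminf_split_initial_segment[of c n] by simp
  qed
  also have "\<bar>\<dots>\<bar> \<le> (\<Sum>k. \<bar>c (k + n)\<bar>)" by (rule summable_rabs[OF summable_tail])
  also have "\<dots> \<le> (\<Sum>k. (1/2::real) ^ Suc (k + n))"
    by (rule suminf_le[OF c_bound summable_tail sums_summable[OF half_powers_sums]])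
  also have "\<dots> = (1/2) ^ n" by (rule sums_unique[OF half_powers_sums, symmetric])
  finally show ?thesis .
qed

lemma baire_continuous_on_binary_real: "baire_continuous_on UNIV binary_real"
  unfolding baire_continuous_on_def
proof (intro ballI allI impI)
  fix x and U :: "real set" assume "open U" "binary_real x \<in> U"
  then obtain e where e: "e > 0" "\<And>r. dist r (binary_real x) < e \<Longrightarrow> r \<in> U"
    unfolding open_dist by blast
  obtain n where n: "(1/2::real) ^ n < e" using real_arch_pow_inv[OF e(1), of "1/2"] by auto
  have "binary_real y \<in> U" if "y \<in> cylinder (Suc n) x" for y
  proof -
    from cylinder_Suc_shift[OF that] have "y 0 = x 0" "y \<circ> Suc \<in> cylinder n (x \<circ> Suc)" by simp_all
    then have "\<bar>binary_real x - binary_real y\<bar> \<le> (1/2) ^ n"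
      using binary_fraction_cylinder by (simp add: binary_real_def)
    with n show ?thesis by (intro e(2)) (simp add: dist_real_def abs_minus_commute)
  qed
  then show "\<exists>n. binary_real ` (UNIV \<inter> cylinder n x) \<subseteq> U" by blast
qed

lemma floor_double_minus: "\<lfloor>2 * y\<rfloor> - 2 * \<lfloor>y\<rfloor> \<in> {0, 1}" for y :: real
proof -
  have "2 * \<lfloor>y\<rfloor> \<le> \<lfloor>2 * y\<rfloor>" by (simp add: le_floor_iff)
  moreover have "2 * y < 2 * real_of_int \<lfloor>y\<rfloor> + 2"
    using real_of_int_floor_add_one_gt[of y] by linarith
  then have "2 * y < real_of_int (2 * \<lfloor>y\<rfloor> + 2)" by simp
  then have "\<lfloor>2 * y\<rfloor> < 2 * \<lfloor>y\<rfloor> + 2" by (simp only: floor_less_iff)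
  ultimately show ?thesis by auto
qed

lemma dyadic_floor_tendsto: "(\<lambda>n. real_of_int \<lfloor>2 ^ n * r\<rfloor> / 2 ^ n) \<longlonglongrightarrow> r"
proof -
  have low: "r - (1/2) ^ n \<le> real_of_int \<lfloor>2 ^ n * r\<rfloor> / 2 ^ n" for n
  proof -
    have "2 ^ n * r - 1 \<le> real_of_int \<lfloor>2 ^ n * r\<rfloor>"
      using real_of_int_floor_gt_diff_one[of "2 ^ n * r"] by linarith
    then have "(2 ^ n * r - 1) / 2 ^ n \<le> real_of_int \<lfloor>2 ^ n * r\<rfloor> / 2 ^ n"
      by (rule divide_right_mono) simp
    moreover have "(2 ^ n * r - 1) / 2 ^ n = r - (1/2) ^ n"
      by (simp add: power_one_over diff_divide_distrib)
    ultimately show ?thesis by simp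
  qed
  have up: "real_of_int \<lfloor>2 ^ n * r\<rfloor> / 2 ^ n \<le> r" for n
  proof -
    have "real_of_int \<lfloor>2 ^ n * r\<rfloor> / 2 ^ n \<le> 2 ^ n * r / 2 ^ n"
      by (rule divide_right_mono[OF of_int_floor_le]) simp
    also have "2 ^ n * r / 2 ^ n = r" by simp
    finally show ?thesis .
  qed
  have "(\<lambda>n. r - (1/2) ^ n) \<longlonglongrightarrow> r - 0"
    by (intro tendsto_diff tendsto_const LIMSEQ_realpow_zero) simp_all
  then have lim: "(\<lambda>n. r - (1/2) ^ n) \<longlonglongrightarrow> r" by simp
  have "\<forall>n. r - (1/2) ^ n \<le> real_of_int \<lfloor>2 ^ n * r\<rfloor> / 2 ^ n"
    "\<forall>n. real_of_int \<lfloor>2 ^ n * r\<rfloor> / 2 ^ n \<le> r"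
    using low up by blast+
  from tendsto_sandwich[OF always_eventually[OF this(1)] always_eventually[OF this(2)] lim tendsto_const]
  show ?thesis .
qed

lemma binary_fraction_bits:
  fixes r :: real
  shows "binary_fraction (\<lambda>k. nat (\<lfloor>2 ^ Suc k * r\<rfloor> - 2 * \<lfloor>2 ^ k * r\<rfloor>)) = r - \<lfloor>r\<rfloor>"
proof -
  define a where "a k = real_of_int \<lfloor>2 ^ k * r\<rfloor> / 2 ^ k" for k
  have digit: "real (min 1 (nat (\<lfloor>2 ^ Suc k * r\<rfloor> - 2 * \<lfloor>2 ^ k * r\<rfloor>))) / 2 ^ Suc k = a (Suc k) - a k"
    for k
  proof -
    have "\<lfloor>2 ^ Suc k * r\<rfloor> - 2 * \<lfloor>2 ^ k * r\<rfloor> \<in> {0, 1}"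
      using floor_double_minus[of "2 ^ k * r"] by (simp add: mult.assoc)
    then show ?thesis by (auto simp: a_def field_simps)
  qed
  have "(\<lambda>n. a n - a 0) \<longlonglongrightarrow> r - \<lfloor>r\<rfloor>"
    unfolding a_def by (intro tendsto_diff dyadic_floor_tendsto) simp
  then have "(\<lambda>k. a (Suc k) - a k) sums (r - \<lfloor>r\<rfloor>)"
    unfolding sums_def sum_lessThan_telescope .
  then show ?thesis unfolding binary_fraction_def digit by (rule sums_unique[symmetric])
qed

lemma surj_binary_real: "surj binary_real"
proof (rule surjI)
  fix r :: real
  define bits where "bits = (\<lambda>k. nat (\<lfloor>2 ^ Suc k * r\<rfloor> - 2 * \<lfloor>2 ^ k * r\<rfloor>))"
  define x where "x = case_nat (int_encode \<lfloor>r\<rfloor>) bits"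
  have "x 0 = int_encode \<lfloor>r\<rfloor>" "x \<circ> Suc = bits" by (simp_all add: x_def fun_eq_iff)
  then have "binary_real x = real_of_int \<lfloor>r\<rfloor> + binary_fraction bits" by (simp add: binary_real_def)
  also have "binary_fraction bits = r - \<lfloor>r\<rfloor>" unfolding bits_def by (rule binary_fraction_bits)
  finally show "binary_real x = r" by simp
qed

lemma suslin_UNIV_real: "suslin (UNIV :: real set)"
proof -
  have "baire_closed UNIV" by (simp add: baire_closed_def)
  then show ?thesis using baire_continuous_on_binary_real surj_binary_real[symmetric] by (rule suslinI)
qed

section \<open>Lusin's separation theorem\<close>

definition borel_separated :: "'a::topological_space set \<Rightarrow> 'a set \<Rightarrow> bool" where
  "borel_separated A B \<longleftrightarrow> (\<exists>S\<in>sets borel. A \<subseteq> S \<and> S \<inter> B = {})"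

lemma borel_separated_UN:
  fixes A B :: "nat \<Rightarrow> 'a::topological_space set"
  assumes "\<And>n m. borel_separated (A n) (B m)"
  shows "borel_separated (\<Union>n. A n) (\<Union>m. B m)"
proof -
  obtain S where S: "\<And>n m. S n m \<in> sets borel" "\<And>n m. A n \<subseteq> S n m" "\<And>n m. S n m \<inter> B m = {}"
    using assms unfolding borel_separated_def by metis
  have "(\<Union>n. \<Inter>m. S n m) \<in> sets borel"
    using S(1) by auto
  moreover have "(\<Union>n. A n) \<subseteq> (\<Union>n. \<Inter>m. S n m)" using S(2) by blast
  moreover have "(\<Union>n. \<Inter>m. S n m) \<inter> (\<Union>m. B m) = {}" using S(3) by blast
  ultimately show ?thesis unfolding borel_separated_def by (intro bexI[of _ "\<Union>n. \<Inter>m. S n m"]) simp_all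
qed

lemma lusin_separation_step:
  fixes f g :: "(nat \<Rightarrow> nat) \<Rightarrow> 'a::topological_space"
  assumes "\<not> borel_separated (f ` (F \<inter> cylinder n u)) (g ` (G \<inter> cylinder n v))"
  shows "\<exists>i j. \<not> borel_separated (f ` (F \<inter> cylinder (Suc n) (u(n := i))))
                                  (g ` (G \<inter> cylinder (Suc n) (v(n := j))))"
proof (rule ccontr)
  assume "\<nexists>i j. \<not> borel_separated (f ` (F \<inter> cylinder (Suc n) (u(n := i))))
                                  (g ` (G \<inter> cylinder (Suc n) (v(n := j))))"
  then have "borel_separated (\<Union>i. f ` (F \<inter> cylinder (Suc n) (u(n := i))))
                             (\<Union>j. g ` (G \<inter> cylinder (Suc n) (v(n := j))))"
    by (intro borel_separated_UN) blast
  moreover have "f ` (F \<inter> cylinder n u) = (\<Union>i. f ` (F \<inter> cylinder (Suc n) (u(n := i))))"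
    "g ` (G \<inter> cylinder n v) = (\<Union>j. g ` (G \<inter> cylinder (Suc n) (v(n := j))))"
    by (simp_all only: cylinder_Suc_split[of n u] cylinder_Suc_split[of n v] Int_UN_distrib image_UN)
  ultimately show False using assms by simp
qed

lemma borel_separated_empty: "borel_separated {} B" "borel_separated A {}"
  unfolding borel_separated_def by (intro bexI[of _ "{}"] bexI[of _ UNIV]; simp)+

lemma lusin_unseparated_branch:
  fixes f g :: "(nat \<Rightarrow> nat) \<Rightarrow> 'a::topological_space"
  assumes "\<not> borel_separated (f ` F) (g ` G)"
  obtains x w where "\<And>n. \<not> borel_separated (f ` (F \<inter> cylinder n x)) (g ` (G \<inter> cylinder n w))"
proof -
  define P where "P n p \<longleftrightarrow>
    \<not> borel_separated (f ` (F \<inter> cylinder n (fst p))) (g ` (G \<inter> cylinder n (snd p)))" for n p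
  have "\<exists>p. P 0 p" using assms by (simp add: P_def)
  moreover have "\<exists>p'. P (Suc n) p' \<and> fst p' \<in> cylinder n (fst p) \<and> snd p' \<in> cylinder n (snd p)"
    if "P n p" for n p
  proof -
    from that have "\<not> borel_separated (f ` (F \<inter> cylinder n (fst p))) (g ` (G \<inter> cylinder n (snd p)))"
      by (simp add: P_def)
    then obtain i j where "\<not> borel_separated (f ` (F \<inter> cylinder (Suc n) ((fst p)(n := i))))
        (g ` (G \<inter> cylinder (Suc n) ((snd p)(n := j))))"
      using lusin_separation_step by blast
    then show ?thesis
      by (intro exI[of _ "((fst p)(n := i), (snd p)(n := j))"]) (simp add: P_def cylinder_def)
  qed
  ultimately obtain p where p: "\<forall>n. P n (p n) \<and>
      fst (p (Suc n)) \<in> cylinder n (fst (p n)) \<and> snd (p (Suc n)) \<in> cylinder n (snd (p n))"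
    using dependent_nat_choice[of P "\<lambda>n p p'. fst p' \<in> cylinder n (fst p) \<and> snd p' \<in> cylinder n (snd p)"]
    by blast
  define x w where "x = (\<lambda>i. fst (p (Suc i)) i)" and "w = (\<lambda>i. snd (p (Suc i)) i)"
  have "cylinder n x = cylinder n (fst (p n))" "cylinder n w = cylinder n (snd (p n))" for n
    unfolding x_def w_def by (rule cylinder_eq[OF cylinder_diagonal]; use p in blast)+
  then have "\<not> borel_separated (f ` (F \<inter> cylinder n x)) (g ` (G \<inter> cylinder n w))" for n
    using p by (simp add: P_def)
  then show ?thesis using that by blast
qed

theorem lusin_separation:
  fixes A B :: "'a::t2_space set"
  assumes "suslin A" "suslin B" "A \<inter> B = {}"
  shows "borel_separated A B"
proof (rule ccontr)
  obtain F f where F: "baire_closed F" "baire_continuous_on F f" "A = f ` F"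
    using assms(1) by (rule suslinE)
  obtain G g where G: "baire_closed G" "baire_continuous_on G g" "B = g ` G"
    using assms(2) by (rule suslinE)
  assume "\<not> borel_separated A B"
  then obtain x w where not_separated:
    "\<And>n. \<not> borel_separated (f ` (F \<inter> cylinder n x)) (g ` (G \<inter> cylinder n w))"
    unfolding F(3) G(3) by (rule lusin_unseparated_branch) blast
  have "x \<in> F"
  proof (rule baire_closedD[OF F(1)])
    show "F \<inter> cylinder n x \<noteq> {}" for n
      using not_separated[of n] borel_separated_empty(1) by force
  qed
  moreover have "w \<in> G"
  proof (rule baire_closedD[OF G(1)])
    show "G \<inter> cylinder n w \<noteq> {}" for n
      using not_separated[of n] borel_separated_empty(2) by force
  qed
  moreover have "f x \<noteq> g w" using assms(3) F(3) G(3) \<open>x \<in> F\<close> \<open>w \<in> G\<close> by blast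
  ultimately obtain n U where U: "open U" "f ` (F \<inter> cylinder n x) \<subseteq> U" "g ` (G \<inter> cylinder n w) \<inter> U = {}"
    by (rule baire_continuous_on_separate[OF F(2) G(2)])
  then have "borel_separated (f ` (F \<inter> cylinder n x)) (g ` (G \<inter> cylinder n w))"
    unfolding borel_separated_def by (intro bexI[of _ U]) auto
  with not_separated show False by blast
qed

section \<open>Saturated Borel sets separating non-equivalent Borel sets\<close>

lemma suslin_Image:
  fixes E :: "('a::t2_space \<times> 'b::t2_space) set"
  assumes "suslin (UNIV :: ('a \<times> 'b) set)" "E \<in> sets borel" "S \<in> sets borel"
  shows "suslin (E `` S)"
proof -
  have "S \<times> UNIV \<in> sets borel" by (rule borel_Times[OF assms(3)]) simp
  with assms(2) have "E \<inter> (S \<times> UNIV) \<in> sets borel" by (rule sets.Int)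
  then have "suslin (E \<inter> (S \<times> UNIV))" by (rule suslin_borel[OF assms(1)])
  then have "suslin (snd ` (E \<inter> (S \<times> UNIV)))"
    by (rule suslin_continuous_image) (intro continuous_on_snd continuous_on_id)
  moreover have "snd ` (E \<inter> (S \<times> UNIV)) = E `` S" by force
  ultimately show ?thesis by simp
qed

lemma equiv_Image_disjoint:
  assumes "equiv UNIV E" "X \<inter> E `` D = {}"
  shows "E `` X \<inter> E `` D = {}"
proof (rule ccontr)
  assume "E `` X \<inter> E `` D \<noteq> {}"
  then obtain a b d where "b \<in> X" "(b, a) \<in> E" "d \<in> D" "(d, a) \<in> E" by blast
  moreover from assms(1) have "sym E" "trans E" by (auto elim: equivE)
  ultimately have "(d, b) \<in> E" by (blast dest: symD transD)
  with \<open>b \<in> X\<close> \<open>d \<in> D\<close> assms(2) show False by blast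
qed

lemma equiv_subset_Image:
  assumes "equiv UNIV E"
  shows "X \<subseteq> E `` X"
proof
  fix x assume "x \<in> X"
  moreover have "refl_on UNIV E" using assms by (simp add: equiv_def)
  then have "(x, x) \<in> E" by (rule refl_onD) simp
  ultimately show "x \<in> E `` X" by blast
qed

lemma equiv_Int_Image_empty: "equiv UNIV E \<Longrightarrow> E \<inter> (C \<times> D) = {} \<Longrightarrow> C \<inter> E `` D = {}"
  by (auto elim: equivE dest: symD)

lemma saturation_separation_step:
  fixes E :: "('a::t2_space \<times> 'a) set"
  assumes "suslin (UNIV :: ('a \<times> 'a) set)" "E \<in> sets borel" "equiv UNIV E"
    and "D \<in> sets borel" "X \<in> sets borel" "X \<inter> E `` D = {}"
  obtains Y where "Y \<in> sets borel" "E `` X \<subseteq> Y" "Y \<inter> E `` D = {}"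
proof -
  have "suslin (E `` X)" by (rule suslin_Image[OF assms(1,2,5)])
  moreover have "suslin (E `` D)" by (rule suslin_Image[OF assms(1,2,4)])
  moreover have "E `` X \<inter> E `` D = {}" by (rule equiv_Image_disjoint[OF assms(3,6)])
  ultimately have "borel_separated (E `` X) (E `` D)" by (rule lusin_separation)
  then show ?thesis using that unfolding borel_separated_def by blast
qed

lemma saturated_borel_separation:
  fixes E :: "('a::t2_space \<times> 'a) set"
  assumes "suslin (UNIV :: ('a \<times> 'a) set)" "E \<in> sets borel" "equiv UNIV E"
    and "C \<in> sets borel" "D \<in> sets borel" "E \<inter> (C \<times> D) = {}"
  obtains A where "A \<in> sets borel" "E `` A \<subseteq> A" "C \<subseteq> A" "A \<inter> D = {}"
proof -
  define P where "P n X \<longleftrightarrow> X \<in> sets borel \<and> X \<inter> E `` D = {} \<and> C \<subseteq> X" for n :: nat and X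
  have "P 0 C" using assms(4) equiv_Int_Image_empty[OF assms(3,6)] by (simp add: P_def)
  moreover have "\<exists>Y. P (Suc n) Y \<and> E `` X \<subseteq> Y" if "P n X" for n X
  proof -
    from that have X: "X \<in> sets borel" "X \<inter> E `` D = {}" "C \<subseteq> X" by (simp_all add: P_def)
    obtain Y where Y: "Y \<in> sets borel" "E `` X \<subseteq> Y" "Y \<inter> E `` D = {}"
      by (rule saturation_separation_step[OF assms(1-3,5) X(1,2)])
    have "C \<subseteq> Y" using X(3) equiv_subset_Image[OF assms(3), of X] Y(2) by blast
    with Y show ?thesis by (intro exI[of _ Y]) (simp add: P_def)
  qed
  ultimately obtain B where B: "\<forall>n. P n (B n) \<and> E `` B n \<subseteq> B (Suc n)"
    using dependent_nat_choice[of P "\<lambda>n X Y. E `` X \<subseteq> Y"] by blast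
  then have B_borel: "B n \<in> sets borel" and B_disjoint: "B n \<inter> E `` D = {}"
    and B_closed: "E `` B n \<subseteq> B (Suc n)" for n
    by (simp_all add: P_def)
  show ?thesis
  proof
    show "(\<Union>n. B n) \<in> sets borel" using B_borel by auto
    have "E `` (\<Union>n. B n) = (\<Union>n. E `` B n)" by (rule Image_UN)
    also have "\<dots> \<subseteq> (\<Union>n. B n)" using B_closed by blast
    finally show "E `` (\<Union>n. B n) \<subseteq> (\<Union>n. B n)" .
    show "C \<subseteq> (\<Union>n. B n)" using B by (auto simp: P_def)
    show "(\<Union>n. B n) \<inter> D = {}" using B_disjoint equiv_subset_Image[OF assms(3), of D] by blast
  qed
qed

section \<open>Covers of an equivalence relation\<close>

lemma saturated_borelI:
  assumes "equiv UNIV E" "A \<in> sets borel" "E `` A \<subseteq> A"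
  shows "A \<in> saturated_borel E"
proof -
  have "x \<in> A \<longleftrightarrow> y \<in> A" if "(x, y) \<in> E" for x y
  proof
    show "x \<in> A \<Longrightarrow> y \<in> A" using that assms(3) by blast
    have "(y, x) \<in> E" using that assms(1) by (auto elim: equivE dest: symD)
    then show "y \<in> A \<Longrightarrow> x \<in> A" using assms(3) by blast
  qed
  with assms(2) show ?thesis by (auto simp: saturated_borel_def)
qed

lemma saturated_borel_covers:
  assumes "A \<in> saturated_borel E"
  shows "E \<subseteq> A \<times> UNIV \<union> UNIV \<times> (- A)" "E \<subseteq> (- A) \<times> UNIV \<union> UNIV \<times> A"
  using assms by (auto simp: saturated_borel_def)

lemma cover_inf_le:
  assumes "B1 \<in> sets borel" "B2 \<in> sets borel" "E \<subseteq> B1 \<times> UNIV \<union> UNIV \<times> B2"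
  shows "cover_inf \<mu>1 \<mu>2 E \<le> measure \<mu>1 B1 + measure \<mu>2 B2"
  unfolding cover_inf_def
proof (rule cInf_lower)
  show "measure \<mu>1 B1 + measure \<mu>2 B2 \<in> {measure \<mu>1 B1 + measure \<mu>2 B2 | B1 B2.
      B1 \<in> sets borel \<and> B2 \<in> sets borel \<and> E \<subseteq> B1 \<times> UNIV \<union> UNIV \<times> B2}"
    using assms by blast
  show "bdd_below {measure \<mu>1 B1 + measure \<mu>2 B2 | B1 B2.
      B1 \<in> sets borel \<and> B2 \<in> sets borel \<and> E \<subseteq> B1 \<times> UNIV \<union> UNIV \<times> B2}"
    by (rule bdd_belowI[of _ 0]) auto
qed

lemma prob_space_measure_Compl:
  assumes "prob_space \<mu>" "sets \<mu> = sets borel" "A \<in> sets borel"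
  shows "measure \<mu> (- A) = 1 - measure \<mu> A"
proof -
  have "space \<mu> = UNIV" using sets_eq_imp_space_eq[OF assms(2)] by simp
  then show ?thesis
    using prob_space.prob_compl[OF assms(1), of A] assms(2,3) by (simp add: Compl_eq_Diff_UNIV)
qed

lemma gap_le_one_minus_cover_inf:
  assumes "prob_space \<mu>1" "sets \<mu>1 = sets borel" "prob_space \<mu>2" "sets \<mu>2 = sets borel"
    and "A \<in> saturated_borel E"
  shows "\<bar>measure \<mu>1 A - measure \<mu>2 A\<bar> \<le> 1 - cover_inf \<mu>1 \<mu>2 E"
proof -
  have A: "A \<in> sets borel" "- A \<in> sets borel" using assms(5) by (auto simp: saturated_borel_def)
  have "cover_inf \<mu>1 \<mu>2 E \<le> measure \<mu>1 A + measure \<mu>2 (- A)"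
    using saturated_borel_covers(1)[OF assms(5)] A by (intro cover_inf_le)
  moreover have "cover_inf \<mu>1 \<mu>2 E \<le> measure \<mu>1 (- A) + measure \<mu>2 A"
    using saturated_borel_covers(2)[OF assms(5)] A by (intro cover_inf_le)
  moreover have "measure \<mu>1 (- A) = 1 - measure \<mu>1 A" "measure \<mu>2 (- A) = 1 - measure \<mu>2 A"
    using prob_space_measure_Compl A(1) assms(1-4) by blast+
  ultimately show ?thesis by linarith
qed

lemma cover_ge_one_minus_saturated_gap:
  fixes E :: "(real \<times> real) set"
  assumes "E \<in> sets borel" "equiv UNIV E"
    and "prob_space \<mu>1" "sets \<mu>1 = sets borel" "prob_space \<mu>2" "sets \<mu>2 = sets borel"
    and "B1 \<in> sets borel" "B2 \<in> sets borel" "E \<subseteq> B1 \<times> UNIV \<union> UNIV \<times> B2"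
  obtains A where "A \<in> saturated_borel E"
    "1 - \<bar>measure \<mu>1 A - measure \<mu>2 A\<bar> \<le> measure \<mu>1 B1 + measure \<mu>2 B2"
proof -
  have "suslin (UNIV :: (real \<times> real) set)"
    using suslin_Times[OF suslin_UNIV_real suslin_UNIV_real] by simp
  moreover have "E \<inter> ((- B1) \<times> (- B2)) = {}" using assms(9) by blast
  ultimately obtain A where A: "A \<in> sets borel" "E `` A \<subseteq> A" "- B1 \<subseteq> A" "A \<inter> - B2 = {}"
    using saturated_borel_separation[OF _ assms(1,2)] assms(7,8) by (metis borel_comp)
  have "measure \<mu>1 (- B1) \<le> measure \<mu>1 A"
    using A(1,3) assms(4)
    by (intro finite_measure.finite_measure_mono[OF prob_space.finite_measure[OF assms(3)]]) simp_all
  then have "1 - measure \<mu>1 B1 \<le> measure \<mu>1 A"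
    using prob_space_measure_Compl[OF assms(3,4,7)] by simp
  moreover have "A \<subseteq> B2" using A(4) by blast
  then have "measure \<mu>2 A \<le> measure \<mu>2 B2"
    using assms(6,8)
    by (intro finite_measure.finite_measure_mono[OF prob_space.finite_measure[OF assms(5)]]) simp_all
  ultimately have "1 - \<bar>measure \<mu>1 A - measure \<mu>2 A\<bar> \<le> measure \<mu>1 B1 + measure \<mu>2 B2" by linarith
  with saturated_borelI[OF assms(2) A(1,2)] show ?thesis by (rule that)
qed

lemma cover_inf_greatest:
  assumes "\<And>B1 B2. B1 \<in> sets borel \<Longrightarrow> B2 \<in> sets borel \<Longrightarrow> E \<subseteq> B1 \<times> UNIV \<union> UNIV \<times> B2 \<Longrightarrow>
    c \<le> measure \<mu>1 B1 + measure \<mu>2 B2"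
  shows "c \<le> cover_inf \<mu>1 \<mu>2 E"
  unfolding cover_inf_def
proof (rule cInf_greatest)
  have "measure \<mu>1 UNIV + measure \<mu>2 UNIV \<in> {measure \<mu>1 B1 + measure \<mu>2 B2 | B1 B2.
      B1 \<in> sets borel \<and> B2 \<in> sets borel \<and> E \<subseteq> B1 \<times> UNIV \<union> UNIV \<times> B2}"
    by (intro CollectI exI[of _ UNIV]) simp
  then show "{measure \<mu>1 B1 + measure \<mu>2 B2 | B1 B2.
      B1 \<in> sets borel \<and> B2 \<in> sets borel \<and> E \<subseteq> B1 \<times> UNIV \<union> UNIV \<times> B2} \<noteq> {}" by blast
next
  fix m assume "m \<in> {measure \<mu>1 B1 + measure \<mu>2 B2 | B1 B2.
      B1 \<in> sets borel \<and> B2 \<in> sets borel \<and> E \<subseteq> B1 \<times> UNIV \<union> UNIV \<times> B2}"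
  then obtain B1 B2 where "m = measure \<mu>1 B1 + measure \<mu>2 B2"
    "B1 \<in> sets borel" "B2 \<in> sets borel" "E \<subseteq> B1 \<times> UNIV \<union> UNIV \<times> B2" by blast
  then show "c \<le> m" using assms[of B1 B2] by simp
qed

lemma bdd_above_measure_gap:
  assumes "prob_space \<mu>1" "prob_space \<mu>2"
  shows "bdd_above ((\<lambda>A. \<bar>measure \<mu>1 A - measure \<mu>2 A\<bar>) ` X)"
proof (rule bdd_aboveI[of _ 1])
  fix t assume "t \<in> (\<lambda>A. \<bar>measure \<mu>1 A - measure \<mu>2 A\<bar>) ` X"
  then obtain A where "t = \<bar>measure \<mu>1 A - measure \<mu>2 A\<bar>" by blast
  moreover have "measure \<mu>1 A \<le> 1" "measure \<mu>2 A \<le> 1"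
    using prob_space.prob_le_1[OF assms(1)] prob_space.prob_le_1[OF assms(2)] by blast+
  moreover have "0 \<le> measure \<mu>1 A" "0 \<le> measure \<mu>2 A" by simp_all
  ultimately show "t \<le> 1" unfolding abs_le_iff by linarith
qed

theorem lemma8p10:
  fixes E :: "(real \<times> real) set" and \<mu>1 \<mu>2 :: "real measure"
  assumes "E \<in> sets (borel :: (real \<times> real) measure)"
    and "equiv UNIV E"
    and "prob_space \<mu>1" and "sets \<mu>1 = sets borel"
    and "prob_space \<mu>2" and "sets \<mu>2 = sets borel"
  shows "cover_inf \<mu>1 \<mu>2 E = 1 - (SUP A \<in> saturated_borel E. \<bar>measure \<mu>1 A - measure \<mu>2 A\<bar>)"
proof -
  let ?gap = "\<lambda>A. \<bar>measure \<mu>1 A - measure \<mu>2 A\<bar>"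
  have "{} \<in> saturated_borel E" by (simp add: saturated_borel_def)
  then have "(SUP A \<in> saturated_borel E. ?gap A) \<le> 1 - cover_inf \<mu>1 \<mu>2 E"
    using gap_le_one_minus_cover_inf[OF assms(3-6)] by (auto intro: cSUP_least)
  moreover have "1 - (SUP A \<in> saturated_borel E. ?gap A) \<le> cover_inf \<mu>1 \<mu>2 E"
  proof (rule cover_inf_greatest)
    fix B1 B2 assume B: "B1 \<in> sets borel" "B2 \<in> sets borel" "E \<subseteq> B1 \<times> UNIV \<union> UNIV \<times> B2"
    obtain A where A: "A \<in> saturated_borel E" "1 - ?gap A \<le> measure \<mu>1 B1 + measure \<mu>2 B2"
      by (rule cover_ge_one_minus_saturated_gap[OF assms B])
    have "?gap A \<le> (SUP A \<in> saturated_borel E. ?gap A)"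
      using bdd_above_measure_gap[OF assms(3,5)] A(1) by (rule cSUP_upper2) simp
    with A(2) show "1 - (SUP A \<in> saturated_borel E. ?gap A) \<le> measure \<mu>1 B1 + measure \<mu>2 B2"
      by linarith
  qed
  ultimately show ?thesis by linarith
qed

end
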